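(* Consider an instance with $n$ agents, $m$ indivisible items and binary additive valuations, and fix a stable allocation $\chi$ with profile $(h_1,\dots,h_n)$ (notation as in the context). For integers $d\ge 0$ define $p_d=\{i: h_i=d \text{ and } \chi \text{ admits a transfer } i\to j \text{ for some } j \text{ with } h_j=d-1\}$, $q_d=\{i: h_i=d \text{ and } \chi \text{ admits a transfer } k\to i \text{ for some } k \text{ with } h_k=d+1\}$, $r_d=\{i: h_i=d,\ i\notin p_d,\ i\notin q_d\}$, $s_d=p_d\cup q_{d-1}$ (with $q_{-1}=\emptyset$), and let $R_d=\bigcup_{i\in r_d}\chi_i$ and $S_d=\bigcup_{i\in s_d}\chi_i$. Then for every stable allocation $\chi'$ and every $d$, every item of $R_d$ is allocated under $\chi'$ to an agent in $r_d$, and every item of $S_d$ is allocated under $\chi'$ to an agent in $s_d$.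
   Context: Agents $[n]$, items $[m]$. Each agent $i$ has a set $L_i\subseteq[m]$ of liked items and valuation $v_i(S)=|S\cap L_i|$. An allocation $\chi=(\chi_1,\dots,\chi_n)$ is a tuple of pairwise disjoint subsets of $[m]$; it is clean if $\chi_i\subseteq L_i$ for all $i$, and max-USW if it maximizes $\sum_i v_i(\chi_i)$. Throughout, "allocation" means a clean max-USW allocation. Profile: $(h_1,\dots,h_n)$, $h_i=|\chi_i|$. Given $\chi$, form a directed graph on $[n]$ with an arc $(i,i')$, $i\ne i'$, whenever some $o\in\chi_i$ has $o\in L_{i'}$; $\chi$ admits a transfer $u\to v$ if there is a simple directed path from $u$ to $v$ with at least one arc. A transfer $u\to v$ is narrowing if $h_u\ge h_v+2$; $\chi$ is stable if it admits no narrowing transfer. *)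

theory Defs
  imports Main
begin

text \<open>Agents are 0..<n, items are 0..<m. L i is the set of items liked by agent i;
  v_i(S) = card (S \<inter> L i). An allocation is chi :: nat => nat set, chi i the bundle of agent i.\<close>

definition is_alloc :: "nat \<Rightarrow> nat \<Rightarrow> (nat \<Rightarrow> nat set) \<Rightarrow> bool" where
  "is_alloc n m chi \<longleftrightarrow> (\<forall>i<n. chi i \<subseteq> {..<m}) \<and>
     (\<forall>i<n. \<forall>j<n. i \<noteq> j \<longrightarrow> chi i \<inter> chi j = {})"

definition usw :: "nat \<Rightarrow> (nat \<Rightarrow> nat set) \<Rightarrow> (nat \<Rightarrow> nat set) \<Rightarrow> nat" where
  "usw n L chi = (\<Sum>i<n. card (chi i \<inter> L i))"

definition clean :: "nat \<Rightarrow> (nat \<Rightarrow> nat set) \<Rightarrow> (nat \<Rightarrow> nat set) \<Rightarrow> bool" where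
  "clean n L chi \<longleftrightarrow> (\<forall>i<n. chi i \<subseteq> L i)"

definition max_usw :: "nat \<Rightarrow> nat \<Rightarrow> (nat \<Rightarrow> nat set) \<Rightarrow> (nat \<Rightarrow> nat set) \<Rightarrow> bool" where
  "max_usw n m L chi \<longleftrightarrow> is_alloc n m chi \<and>
     (\<forall>chi'. is_alloc n m chi' \<longrightarrow> usw n L chi' \<le> usw n L chi)"

definition arc :: "nat \<Rightarrow> (nat \<Rightarrow> nat set) \<Rightarrow> (nat \<Rightarrow> nat set) \<Rightarrow> nat \<Rightarrow> nat \<Rightarrow> bool" where
  "arc n L chi i i' \<longleftrightarrow> i < n \<and> i' < n \<and> i \<noteq> i' \<and> (\<exists>x\<in>chi i. x \<in> L i')"

definition transfer :: "nat \<Rightarrow> (nat \<Rightarrow> nat set) \<Rightarrow> (nat \<Rightarrow> nat set) \<Rightarrow> nat \<Rightarrow> nat \<Rightarrow> bool" where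
  "transfer n L chi u v \<longleftrightarrow> (\<exists>xs. length xs \<ge> 2 \<and> hd xs = u \<and> last xs = v \<and> distinct xs \<and>
     (\<forall>k. Suc k < length xs \<longrightarrow> arc n L chi (xs ! k) (xs ! Suc k)))"

definition stable_alloc :: "nat \<Rightarrow> nat \<Rightarrow> (nat \<Rightarrow> nat set) \<Rightarrow> (nat \<Rightarrow> nat set) \<Rightarrow> bool" where
  "stable_alloc n m L chi \<longleftrightarrow> clean n L chi \<and> max_usw n m L chi \<and>
     \<not> (\<exists>u v. transfer n L chi u v \<and> card (chi u) \<ge> card (chi v) + 2)"

definition p_set :: "nat \<Rightarrow> (nat \<Rightarrow> nat set) \<Rightarrow> (nat \<Rightarrow> nat set) \<Rightarrow> nat \<Rightarrow> nat set" where
  "p_set n L chi d = {i. i < n \<and> card (chi i) = d \<and>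
     (\<exists>j<n. card (chi j) + 1 = d \<and> transfer n L chi i j)}"

definition q_set :: "nat \<Rightarrow> (nat \<Rightarrow> nat set) \<Rightarrow> (nat \<Rightarrow> nat set) \<Rightarrow> nat \<Rightarrow> nat set" where
  "q_set n L chi d = {i. i < n \<and> card (chi i) = d \<and>
     (\<exists>k<n. card (chi k) = d + 1 \<and> transfer n L chi k i)}"

definition r_set :: "nat \<Rightarrow> (nat \<Rightarrow> nat set) \<Rightarrow> (nat \<Rightarrow> nat set) \<Rightarrow> nat \<Rightarrow> nat set" where
  "r_set n L chi d = {i. i < n \<and> card (chi i) = d \<and> i \<notin> p_set n L chi d \<and> i \<notin> q_set n L chi d}"

definition s_set :: "nat \<Rightarrow> (nat \<Rightarrow> nat set) \<Rightarrow> (nat \<Rightarrow> nat set) \<Rightarrow> nat \<Rightarrow> nat set" where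
  "s_set n L chi d = p_set n L chi d \<union> (if d = 0 then {} else q_set n L chi (d - 1))"

definition R_items :: "nat \<Rightarrow> (nat \<Rightarrow> nat set) \<Rightarrow> (nat \<Rightarrow> nat set) \<Rightarrow> nat \<Rightarrow> nat set" where
  "R_items n L chi d = (\<Union>i\<in>r_set n L chi d. chi i)"

definition S_items :: "nat \<Rightarrow> (nat \<Rightarrow> nat set) \<Rightarrow> (nat \<Rightarrow> nat set) \<Rightarrow> nat \<Rightarrow> nat set" where
  "S_items n L chi d = (\<Union>i\<in>s_set n L chi d. chi i)"

end

theory Submission
  imports Defs "HOL-Library.Transitive_Closure_Table"
begin

text \<open>Call a set E of agents closed under \<open>\<chi>\<close> if no item held by E is liked by an agent
  outside E, and an up-set if its members hold at least t items and all other agents at most t.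
  Let E be a closed up-set and \<open>\<chi>'\<close> another stable allocation. Welfare maximality keeps every
  item allocated to an agent who likes it, so \<open>\<chi>'\<close> gives all items of E to E. Conversely, let
  C be the agents reachable under \<open>\<chi>'\<close> from the members of E that gained items; C is closed
  under \<open>\<chi>'\<close>, so C does not gain in total, and an agent of C outside E cannot have lost items
  without creating a narrowing transfer in \<open>\<chi>'\<close>. Hence E does not gain either, and \<open>\<chi>'\<close>
  allocates exactly the items of E to E.
  Stability of \<open>\<chi>\<close> makes both \<open>{i. h\<^sub>i \<ge> d + 1} \<union> q\<^sub>d\<close> and \<open>{i. h\<^sub>i \<ge> d} - p\<^sub>d\<close> closed
  up-sets, and \<open>r\<^sub>d\<close> and \<open>s\<^sub>d\<close> are differences of such sets.\<close>

lemma rtranclp_hd_last_of_chain: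
  assumes "xs \<noteq> []" and "\<forall>k. Suc k < length xs \<longrightarrow> r (xs ! k) (xs ! Suc k)"
  shows "r\<^sup>*\<^sup>* (hd xs) (last xs)"
  using assms
proof (induction xs)
  case (Cons x xs)
  show ?case
  proof (cases xs)
    case (Cons y ys)
    have "r x y" using Cons.prems(2) \<open>xs = y # ys\<close> by force
    moreover have "r\<^sup>*\<^sup>* (hd xs) (last xs)"
      using Cons.IH Cons.prems(2) \<open>xs = y # ys\<close> by force
    ultimately show ?thesis using \<open>xs = y # ys\<close> by simp
  qed simp
qed simp

lemma transfer_iff_rtranclp:
  "transfer n L chi u v \<longleftrightarrow> u \<noteq> v \<and> (arc n L chi)\<^sup>*\<^sup>* u v"
proof
  assume "transfer n L chi u v"
  then obtain xs where xs: "length xs \<ge> 2" "hd xs = u" "last xs = v" "distinct xs"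
    "\<forall>k. Suc k < length xs \<longrightarrow> arc n L chi (xs ! k) (xs ! Suc k)"
    unfolding transfer_def by blast
  then obtain ys where "xs = u # ys" "ys \<noteq> []"
    by (cases xs) (auto simp: Suc_le_length_iff)
  then have "u \<noteq> v" using xs(3,4) by auto
  with xs show "u \<noteq> v \<and> (arc n L chi)\<^sup>*\<^sup>* u v"
    using rtranclp_hd_last_of_chain[of xs] by fastforce
next
  assume "u \<noteq> v \<and> (arc n L chi)\<^sup>*\<^sup>* u v"
  then obtain ys where path: "rtrancl_path (arc n L chi) u ys v" and "distinct (u # ys)" and "u \<noteq> v"
    by (meson rtranclp_eq_rtrancl_path rtrancl_path_distinct)
  moreover have "ys \<noteq> []" using path \<open>u \<noteq> v\<close> by (auto elim: rtrancl_path.cases)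
  ultimately show "transfer n L chi u v"
    unfolding transfer_def
    by (intro exI[of _ "u # ys"]) (auto simp: Suc_le_eq rtrancl_path_last rtrancl_path_nth)
qed

lemma transfer_if_arc:
  assumes "arc n L chi u v"
  shows "transfer n L chi u v"
proof -
  have "u \<noteq> v" using assms by (simp add: arc_def)
  then show ?thesis using assms by (simp add: transfer_iff_rtranclp)
qed

lemma transfer_trans:
  "transfer n L chi u v \<Longrightarrow> transfer n L chi v w \<Longrightarrow> u \<noteq> w \<Longrightarrow> transfer n L chi u w"
  unfolding transfer_iff_rtranclp by (meson rtranclp_trans)

lemma stable_allocD:
  assumes "stable_alloc n m L chi"
  shows "clean n L chi" and "is_alloc n m chi" and "max_usw n m L chi"
  using assms unfolding stable_alloc_def max_usw_def by auto

lemma stable_alloc_transfer_card_le: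
  "stable_alloc n m L chi \<Longrightarrow> transfer n L chi u v \<Longrightarrow> card (chi u) \<le> card (chi v) + 1"
  unfolding stable_alloc_def by fastforce

lemma is_alloc_finite: "is_alloc n m chi \<Longrightarrow> i < n \<Longrightarrow> finite (chi i)"
  unfolding is_alloc_def by (meson finite_lessThan finite_subset)

lemma card_UN_bundles:
  assumes "is_alloc n m chi" and "E \<subseteq> {..<n}"
  shows "card (\<Union>i\<in>E. chi i) = (\<Sum>i\<in>E. card (chi i))"
proof (rule card_UN_disjoint)
  show "finite E" using assms(2) by (rule finite_subset) simp
  show "\<forall>i\<in>E. finite (chi i)" using assms is_alloc_finite by blast
  show "\<forall>i\<in>E. \<forall>j\<in>E. i \<noteq> j \<longrightarrow> chi i \<inter> chi j = {}"
    using assms unfolding is_alloc_def by blast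
qed

lemma finite_UN_bundles:
  "is_alloc n m chi \<Longrightarrow> E \<subseteq> {..<n} \<Longrightarrow> finite (\<Union>i\<in>E. chi i)"
  by (meson finite_UN_I finite_lessThan finite_subset is_alloc_finite lessThan_iff subsetD)

lemma usw_insert_liked:
  assumes "i < n" and "x \<in> L i" and "x \<notin> chi i" and "finite (chi i)"
  shows "usw n L (chi(i := insert x (chi i))) = Suc (usw n L chi)"
proof -
  let ?chi' = "chi(i := insert x (chi i))"
  have "usw n L ?chi' = card (?chi' i \<inter> L i) + (\<Sum>k\<in>{..<n}-{i}. card (chi k \<inter> L k))"
    unfolding usw_def using assms(1) by (simp add: sum.remove)
  also have "card (?chi' i \<inter> L i) = Suc (card (chi i \<inter> L i))"
    using assms(2-4) by (simp add: Int_insert_left_if1)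
  also have "Suc (card (chi i \<inter> L i)) + (\<Sum>k\<in>{..<n}-{i}. card (chi k \<inter> L k)) = Suc (usw n L chi)"
    unfolding usw_def using assms(1) by (simp add: sum.remove)
  finally show ?thesis .
qed

lemma max_usw_allocates_item:
  assumes "clean n L X" and "is_alloc n m X" and "max_usw n m L Y"
    and "i < n" and "x \<in> X i"
  shows "\<exists>j<n. x \<in> Y j"
proof (rule ccontr)
  assume unallocated: "\<not> (\<exists>j<n. x \<in> Y j)"
  have Y: "is_alloc n m Y" using assms(3) unfolding max_usw_def by blast
  have "x < m" and "x \<in> L i" using assms(1,2,4,5) unfolding clean_def is_alloc_def by blast+
  then have "is_alloc n m (Y(i := insert x (Y i)))"
    using Y unallocated unfolding is_alloc_def by auto
  then have "usw n L (Y(i := insert x (Y i))) \<le> usw n L Y"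
    using assms(3) unfolding max_usw_def by blast
  moreover have "usw n L (Y(i := insert x (Y i))) = Suc (usw n L Y)"
    using \<open>x \<in> L i\<close> unallocated assms(4) is_alloc_finite[OF Y]
    by (intro usw_insert_liked) auto
  ultimately show False by simp
qed

definition arc_closed :: "nat \<Rightarrow> (nat \<Rightarrow> nat set) \<Rightarrow> (nat \<Rightarrow> nat set) \<Rightarrow> nat set \<Rightarrow> bool" where
  "arc_closed n L chi E \<longleftrightarrow> E \<subseteq> {..<n} \<and> (\<forall>i\<in>E. \<forall>j. arc n L chi i j \<longrightarrow> j \<in> E)"

lemma arc_closed_reachable:
  "arc_closed n L chi {b. b < n \<and> (\<exists>a\<in>A. (arc n L chi)\<^sup>*\<^sup>* a b)}"
  unfolding arc_closed_def
proof (intro conjI ballI allI impI)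
  fix i j assume "i \<in> {b. b < n \<and> (\<exists>a\<in>A. (arc n L chi)\<^sup>*\<^sup>* a b)}" and ij: "arc n L chi i j"
  then obtain a where "a \<in> A" and "(arc n L chi)\<^sup>*\<^sup>* a i" by blast
  with ij have "(arc n L chi)\<^sup>*\<^sup>* a j" by simp
  moreover have "j < n" using ij by (simp add: arc_def)
  ultimately show "j \<in> {b. b < n \<and> (\<exists>a\<in>A. (arc n L chi)\<^sup>*\<^sup>* a b)}"
    using \<open>a \<in> A\<close> by blast
qed blast

lemma arc_closed_bundles_subset:
  assumes "clean n L X" and "is_alloc n m X" and "clean n L Y" and "max_usw n m L Y"
    and "arc_closed n L X E"
  shows "(\<Union>i\<in>E. X i) \<subseteq> (\<Union>i\<in>E. Y i)"
proof
  fix x assume "x \<in> (\<Union>i\<in>E. X i)"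
  then obtain i where i: "i \<in> E" "x \<in> X i" by blast
  have "i < n" using i assms(5) unfolding arc_closed_def by blast
  then obtain j where j: "j < n" "x \<in> Y j"
    using max_usw_allocates_item[OF assms(1,2,4)] i by blast
  have "i = j \<or> arc n L X i j"
    using assms(3) i j \<open>i < n\<close> unfolding clean_def arc_def by blast
  then have "j \<in> E" using assms(5) i unfolding arc_closed_def by blast
  then show "x \<in> (\<Union>i\<in>E. Y i)" using j by blast
qed

lemma sum_le_through_superset:
  fixes f g :: "'a \<Rightarrow> 'b::ordered_ab_semigroup_monoid_add_imp_le"
  assumes "finite A" and "finite C"
    and "sum f C \<le> sum g C"
    and "\<And>i. i \<in> C - A \<Longrightarrow> g i \<le> f i"
    and "\<And>i. i \<in> A - C \<Longrightarrow> f i \<le> g i"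
  shows "sum f A \<le> sum g A"
proof -
  have split_C: "sum h C = sum h (A \<inter> C) + sum h (C - A)" for h :: "'a \<Rightarrow> 'b"
    using sum.Int_Diff[OF assms(2), of h A] by (simp add: Int_commute)
  have "sum f (A \<inter> C) + sum f (C - A) \<le> sum g (A \<inter> C) + sum g (C - A)"
    using assms(3) unfolding split_C .
  also have "\<dots> \<le> sum g (A \<inter> C) + sum f (C - A)"
    using assms(4) by (intro add_left_mono sum_mono) auto
  finally have "sum f (A \<inter> C) \<le> sum g (A \<inter> C)"
    by (rule add_le_imp_le_right)
  moreover have "sum f (A - C) \<le> sum g (A - C)"
    using assms(5) by (rule sum_mono)
  ultimately show ?thesis
    unfolding sum.Int_Diff[OF assms(1), of f C] sum.Int_Diff[OF assms(1), of g C]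
    by (rule add_mono)
qed

lemma sum_card_le_of_closed_up_set:
  assumes S: "stable_alloc n m L chi" and S': "stable_alloc n m L chi'"
    and closed: "arc_closed n L chi E"
    and above: "\<forall>i\<in>E. t \<le> card (chi i)"
    and below: "\<forall>i<n. i \<notin> E \<longrightarrow> card (chi i) \<le> t"
  shows "(\<Sum>i\<in>E. card (chi' i)) \<le> (\<Sum>i\<in>E. card (chi i))"
proof -
  note X = stable_allocD[OF S] and Y = stable_allocD[OF S']
  have E: "E \<subseteq> {..<n}" using closed unfolding arc_closed_def by blast
  define C where "C = {b. b < n \<and>
    (\<exists>a\<in>{a\<in>E. card (chi a) < card (chi' a)}. (arc n L chi')\<^sup>*\<^sup>* a b)}"
  have C: "arc_closed n L chi' C" unfolding C_def by (rule arc_closed_reachable)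
  then have "C \<subseteq> {..<n}" unfolding arc_closed_def by blast
  have "(\<Sum>i\<in>C. card (chi' i)) = card (\<Union>i\<in>C. chi' i)"
    using card_UN_bundles[OF Y(2) \<open>C \<subseteq> {..<n}\<close>] by simp
  also have "\<dots> \<le> card (\<Union>i\<in>C. chi i)"
    using finite_UN_bundles[OF X(2) \<open>C \<subseteq> {..<n}\<close>] arc_closed_bundles_subset[OF Y(1,2) X(1,3) C]
    by (rule card_mono)
  also have "\<dots> = (\<Sum>i\<in>C. card (chi i))"
    using card_UN_bundles[OF X(2) \<open>C \<subseteq> {..<n}\<close>] .
  finally have sum_C: "(\<Sum>i\<in>C. card (chi' i)) \<le> (\<Sum>i\<in>C. card (chi i))" .
  show ?thesis
  proof (rule sum_le_through_superset[where C = C])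
    show "finite E" using E by (rule finite_subset) simp
    show "finite C" using \<open>C \<subseteq> {..<n}\<close> by (rule finite_subset) simp
    show "(\<Sum>i\<in>C. card (chi' i)) \<le> (\<Sum>i\<in>C. card (chi i))" by (rule sum_C)
  next
    fix b assume b: "b \<in> C - E"
    then obtain a where a: "a \<in> E" "card (chi a) < card (chi' a)" "(arc n L chi')\<^sup>*\<^sup>* a b" and "b < n"
      unfolding C_def by blast
    then have "transfer n L chi' a b" using b by (auto simp: transfer_iff_rtranclp)
    then have "card (chi' a) \<le> card (chi' b) + 1" by (rule stable_alloc_transfer_card_le[OF S'])
    moreover have "card (chi b) \<le> t" "t \<le> card (chi a)" using below above a b \<open>b < n\<close> by auto
    ultimately show "card (chi b) \<le> card (chi' b)" using a(2) by linarith
  next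
    fix a assume "a \<in> E - C"
    then show "card (chi' a) \<le> card (chi a)" using E unfolding C_def by force
  qed
qed

lemma bundles_eq_of_closed_up_set:
  assumes S: "stable_alloc n m L chi" and S': "stable_alloc n m L chi'"
    and closed: "arc_closed n L chi E"
    and "\<forall>i\<in>E. t \<le> card (chi i)"
    and "\<forall>i<n. i \<notin> E \<longrightarrow> card (chi i) \<le> t"
  shows "(\<Union>i\<in>E. chi' i) = (\<Union>i\<in>E. chi i)"
proof -
  note X = stable_allocD[OF S] and Y = stable_allocD[OF S']
  have E: "E \<subseteq> {..<n}" using closed unfolding arc_closed_def by blast
  have "(\<Union>i\<in>E. chi i) \<subseteq> (\<Union>i\<in>E. chi' i)"
    by (rule arc_closed_bundles_subset[OF X(1,2) Y(1,3) closed])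
  moreover have "card (\<Union>i\<in>E. chi' i) \<le> card (\<Union>i\<in>E. chi i)"
    using sum_card_le_of_closed_up_set[OF assms] card_UN_bundles[OF X(2) E] card_UN_bundles[OF Y(2) E]
    by simp
  ultimately have "(\<Union>i\<in>E. chi i) = (\<Union>i\<in>E. chi' i)"
    by (rule card_seteq[OF finite_UN_bundles[OF Y(2) E]])
  then show ?thesis ..
qed

definition upper_q_set :: "nat \<Rightarrow> (nat \<Rightarrow> nat set) \<Rightarrow> (nat \<Rightarrow> nat set) \<Rightarrow> nat \<Rightarrow> nat set" where
  "upper_q_set n L chi d = {i. i < n \<and> (d + 1 \<le> card (chi i) \<or> i \<in> q_set n L chi d)}"

definition upper_nonp_set :: "nat \<Rightarrow> (nat \<Rightarrow> nat set) \<Rightarrow> (nat \<Rightarrow> nat set) \<Rightarrow> nat \<Rightarrow> nat set" where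
  "upper_nonp_set n L chi d = {i. i < n \<and> d \<le> card (chi i) \<and> i \<notin> p_set n L chi d}"

lemma arc_closed_upper_q_set:
  assumes S: "stable_alloc n m L chi"
  shows "arc_closed n L chi (upper_q_set n L chi d)"
  unfolding arc_closed_def
proof (intro conjI ballI allI impI)
  fix i j assume i: "i \<in> upper_q_set n L chi d" and ij: "arc n L chi i j"
  have j: "j < n" using ij by (simp add: arc_def)
  have T: "transfer n L chi i j" using ij by (rule transfer_if_arc)
  show "j \<in> upper_q_set n L chi d"
  proof (cases "d + 1 \<le> card (chi i)")
    case True
    moreover have "card (chi i) \<le> card (chi j) + 1" using stable_alloc_transfer_card_le[OF S T] .
    ultimately have "d + 1 \<le> card (chi j) \<or> (card (chi i) = d + 1 \<and> card (chi j) = d)" by linarith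
    then show ?thesis using i j T unfolding upper_q_set_def q_set_def by auto
  next
    case False
    then obtain k where k: "k < n" "card (chi k) = d + 1" "transfer n L chi k i" "card (chi i) = d"
      using i unfolding upper_q_set_def q_set_def by auto
    show ?thesis
    proof (cases "k = j")
      case True
      then show ?thesis using k j unfolding upper_q_set_def by auto
    next
      case False
      then have Tkj: "transfer n L chi k j" using transfer_trans k(3) T by blast
      then have "card (chi k) \<le> card (chi j) + 1" by (rule stable_alloc_transfer_card_le[OF S])
      then show ?thesis using k j Tkj unfolding upper_q_set_def q_set_def by auto
    qed
  qed
qed (auto simp: upper_q_set_def)

lemma arc_closed_upper_nonp_set:
  assumes S: "stable_alloc n m L chi"
  shows "arc_closed n L chi (upper_nonp_set n L chi d)"
  unfolding arc_closed_def
proof (intro conjI ballI allI impI)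
  fix i j assume i: "i \<in> upper_nonp_set n L chi d" and ij: "arc n L chi i j"
  have j: "j < n" using ij by (simp add: arc_def)
  have T: "transfer n L chi i j" using ij by (rule transfer_if_arc)
  have i': "i < n" "d \<le> card (chi i)" "i \<notin> p_set n L chi d"
    using i unfolding upper_nonp_set_def by auto
  have "card (chi i) \<le> card (chi j) + 1" using stable_alloc_transfer_card_le[OF S T] .
  then have "d \<le> card (chi j)" using i' j T unfolding p_set_def by force
  moreover have "j \<notin> p_set n L chi d"
  proof
    assume "j \<in> p_set n L chi d"
    then obtain k where k: "k < n" "card (chi k) + 1 = d" "transfer n L chi j k" "card (chi j) = d"
      unfolding p_set_def by blast
    then have "i \<noteq> k" using i' by auto
    then have Tik: "transfer n L chi i k" using transfer_trans T k(3) by blast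
    then have "card (chi i) \<le> card (chi k) + 1" by (rule stable_alloc_transfer_card_le[OF S])
    then have "i \<in> p_set n L chi d" using i' k Tik unfolding p_set_def by auto
    then show False using i' by blast
  qed
  ultimately show "j \<in> upper_nonp_set n L chi d" using j unfolding upper_nonp_set_def by blast
qed (auto simp: upper_nonp_set_def)

lemma bundles_eq_upper_q_set:
  assumes "stable_alloc n m L chi" and "stable_alloc n m L chi'"
  shows "(\<Union>i\<in>upper_q_set n L chi d. chi' i) = (\<Union>i\<in>upper_q_set n L chi d. chi i)"
  using assms arc_closed_upper_q_set[OF assms(1)]
  by (rule bundles_eq_of_closed_up_set[where t = d]) (auto simp: upper_q_set_def q_set_def)

lemma bundles_eq_upper_nonp_set:
  assumes "stable_alloc n m L chi" and "stable_alloc n m L chi'"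
  shows "(\<Union>i\<in>upper_nonp_set n L chi d. chi' i) = (\<Union>i\<in>upper_nonp_set n L chi d. chi i)"
  using assms arc_closed_upper_nonp_set[OF assms(1)]
  by (rule bundles_eq_of_closed_up_set[where t = d]) (auto simp: upper_nonp_set_def p_set_def)

lemma r_set_eq_diff: "r_set n L chi d = upper_nonp_set n L chi d - upper_q_set n L chi d"
  unfolding r_set_def upper_nonp_set_def upper_q_set_def q_set_def by auto

lemma s_set_eq_diff:
  "0 < d \<Longrightarrow> s_set n L chi d = upper_q_set n L chi (d - 1) - upper_nonp_set n L chi d"
  unfolding s_set_def upper_nonp_set_def upper_q_set_def p_set_def q_set_def by auto

lemma s_set_0: "s_set n L chi 0 = {}"
  unfolding s_set_def p_set_def by auto

lemma bundles_diff_kept: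
  assumes "is_alloc n m chi" and "E\<^sub>1 \<subseteq> {..<n}" and "E\<^sub>2 \<subseteq> {..<n}"
    and "(\<Union>i\<in>E\<^sub>1. chi' i) = (\<Union>i\<in>E\<^sub>1. chi i)"
    and "(\<Union>i\<in>E\<^sub>2. chi' i) = (\<Union>i\<in>E\<^sub>2. chi i)"
  shows "\<forall>x\<in>(\<Union>i\<in>E\<^sub>1 - E\<^sub>2. chi i). \<exists>j\<in>E\<^sub>1 - E\<^sub>2. x \<in> chi' j"
proof
  fix x assume "x \<in> (\<Union>i\<in>E\<^sub>1 - E\<^sub>2. chi i)"
  then obtain i where i: "i \<in> E\<^sub>1 - E\<^sub>2" "x \<in> chi i" by blast
  then obtain j where j: "j \<in> E\<^sub>1" "x \<in> chi' j" using assms(4) by blast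
  have "j \<notin> E\<^sub>2"
  proof
    assume "j \<in> E\<^sub>2"
    then obtain k where "k \<in> E\<^sub>2" "x \<in> chi k" using assms(5) j(2) by blast
    with assms(1-3) i show False unfolding is_alloc_def by blast
  qed
  then show "\<exists>j\<in>E\<^sub>1 - E\<^sub>2. x \<in> chi' j" using j by blast
qed

theorem lemma2:
  fixes n m d :: nat and L chi chi' :: "nat \<Rightarrow> nat set"
  assumes "\<forall>i<n. L i \<subseteq> {..<m}"
    and S: "stable_alloc n m L chi"
    and S': "stable_alloc n m L chi'"
  shows "(\<forall>x\<in>R_items n L chi d. \<exists>i\<in>r_set n L chi d. x \<in> chi' i) \<and>
         (\<forall>x\<in>S_items n L chi d. \<exists>i\<in>s_set n L chi d. x \<in> chi' i)"
proof
  note alloc = stable_allocD(2)[OF S]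
  have upper: "upper_q_set n L chi e \<subseteq> {..<n}" "upper_nonp_set n L chi e \<subseteq> {..<n}" for e
    by (auto simp: upper_q_set_def upper_nonp_set_def)
  note kept = bundles_diff_kept[OF alloc upper(1,2) bundles_eq_upper_q_set[OF S S']
      bundles_eq_upper_nonp_set[OF S S']]
    bundles_diff_kept[OF alloc upper(2,1) bundles_eq_upper_nonp_set[OF S S']
      bundles_eq_upper_q_set[OF S S']]
  show "\<forall>x\<in>R_items n L chi d. \<exists>i\<in>r_set n L chi d. x \<in> chi' i"
    unfolding R_items_def r_set_eq_diff by (rule kept(2))
  show "\<forall>x\<in>S_items n L chi d. \<exists>i\<in>s_set n L chi d. x \<in> chi' i"
  proof (cases "d = 0")
    case True
    then show ?thesis unfolding S_items_def by (simp add: s_set_0)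
  next
    case False
    then have "s_set n L chi d = upper_q_set n L chi (d - 1) - upper_nonp_set n L chi d"
      by (simp add: s_set_eq_diff)
    then show ?thesis unfolding S_items_def by (simp only:) (rule kept(1))
  qed
qed

end
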